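(* Let $\mathbb{R}^n_s$ be $\mathbb{R}^n$ with a non-degenerate symmetric bilinear form $\langle\cdot,\cdot\rangle$ of signature $(n-s,s)$, and let $G\subset\mathrm{Iso}(\mathbb{R}^n_s)$ be a real Zariski-closed subgroup whose centralizer in $\mathrm{Iso}(\mathbb{R}^n_s)$ acts transitively on $\mathbb{R}^n$. Fix $p\in\mathbb{R}^n$ and let $(\cdot,\cdot)$ be the orbit metric on $G$, i.e. the pullback of $\langle\cdot,\cdot\rangle$ restricted to the orbit $F_p=G.p$ via the orbit map $g\mapsto g.p$ (a left-invariant, possibly degenerate, field of symmetric bilinear forms). Then $(\cdot,\cdot)$ is bi-invariant: for all left-invariant vector fields $X,Y,Z$ on $G$, $$([X,Y],Z)=-(Y,[X,Z]).$$ *)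

theory Defs
  imports "HOL-Analysis.Analysis"
begin

type_synonym 'n aff = "(real^'n^'n) \<times> (real^'n)"

definition form :: "real^'n^'n \<Rightarrow> real^'n \<Rightarrow> real^'n \<Rightarrow> real" where
  "form S x y = x \<bullet> (S *v y)"

definition nondeg_symmetric :: "real^'n^'n \<Rightarrow> bool" where
  "nondeg_symmetric S \<longleftrightarrow> transpose S = S \<and> invertible S"

definition aff_apply :: "'n::finite aff \<Rightarrow> real^'n \<Rightarrow> real^'n" where
  "aff_apply g x = fst g *v x + snd g"

definition aff_mult :: "'n::finite aff \<Rightarrow> 'n aff \<Rightarrow> 'n aff" where
  "aff_mult g h = (fst g ** fst h, fst g *v snd h + snd g)"

definition aff_one :: "'n::finite aff" where
  "aff_one = (mat 1, 0)"

definition aff_inv :: "'n::finite aff \<Rightarrow> 'n aff" where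
  "aff_inv g = (matrix_inv (fst g), - (matrix_inv (fst g) *v snd g))"

definition Iso :: "real^'n^'n \<Rightarrow> 'n::finite aff set" where
  "Iso S = {g. transpose (fst g) ** S ** fst g = S}"

definition is_subgroup :: "'n::finite aff set \<Rightarrow> 'n aff set \<Rightarrow> bool" where
  "is_subgroup G H \<longleftrightarrow> G \<subseteq> H \<and> aff_one \<in> G \<and>
     (\<forall>g\<in>G. \<forall>h\<in>G. aff_mult g h \<in> G) \<and> (\<forall>g\<in>G. aff_inv g \<in> G)"

inductive_set poly_fun :: "('n::finite aff \<Rightarrow> real) set" where
  const: "(\<lambda>_. c) \<in> poly_fun"
| mat_coord: "(\<lambda>g. fst g $ i $ j) \<in> poly_fun"
| vec_coord: "(\<lambda>g. snd g $ i) \<in> poly_fun"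
| add: "f \<in> poly_fun \<Longrightarrow> h \<in> poly_fun \<Longrightarrow> (\<lambda>g. f g + h g) \<in> poly_fun"
| mult: "f \<in> poly_fun \<Longrightarrow> h \<in> poly_fun \<Longrightarrow> (\<lambda>g. f g * h g) \<in> poly_fun"

definition zariski_closed_in_Iso :: "real^'n^'n \<Rightarrow> 'n::finite aff set \<Rightarrow> bool" where
  "zariski_closed_in_Iso S G \<longleftrightarrow>
     (\<exists>P \<subseteq> poly_fun. G = {g \<in> Iso S. \<forall>f\<in>P. f g = 0})"

definition centralizer_transitive :: "real^'n^'n \<Rightarrow> 'n::finite aff set \<Rightarrow> bool" where
  "centralizer_transitive S G \<longleftrightarrow>
     (\<forall>x y. \<exists>h\<in>Iso S. (\<forall>g\<in>G. aff_mult h g = aff_mult g h) \<and> aff_apply h x = y)"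

definition lie_alg :: "'n::finite aff set \<Rightarrow> 'n aff set" where
  "lie_alg G = {X. \<exists>c. (\<forall>t. c t \<in> G) \<and> c 0 = aff_one \<and>
                    (c has_derivative (\<lambda>t. t *\<^sub>R X)) (at 0)}"

text \<open>Lie bracket of Lie algebra elements (X,v),(Y,w) (commutator of affine matrices).\<close>
definition lie_bracket :: "'n::finite aff \<Rightarrow> 'n aff \<Rightarrow> 'n aff" where
  "lie_bracket X Y = (fst X ** fst Y - fst Y ** fst X, fst X *v snd Y - fst Y *v snd X)"

text \<open>Value at g of the left-invariant vector field generated by X (differential of left
  translation by g).\<close>
definition left_inv_field :: "'n::finite aff \<Rightarrow> 'n aff \<Rightarrow> 'n aff" where
  "left_inv_field g X = (fst g ** fst X, fst g *v snd X)"

text \<open>Orbit map h |-> h.p; it is linear in (A,b), hence equals its own differential.\<close>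
definition orbit_map :: "real^'n \<Rightarrow> 'n::finite aff \<Rightarrow> real^'n" where
  "orbit_map p h = aff_apply h p"

text \<open>Orbit metric: pullback of the form via the orbit map, evaluated on tangent vectors U, V
  (at any point of G).\<close>
definition orbit_metric :: "real^'n^'n \<Rightarrow> real^'n \<Rightarrow> 'n::finite aff \<Rightarrow> 'n aff \<Rightarrow> real" where
  "orbit_metric S p U V = form S (orbit_map p U) (orbit_map p V)"

end

theory Submission
  imports Defs
begin

text \<open>Write \<open>W.q = A\<^sub>W q + b\<^sub>W\<close> for the infinitesimal action of a Lie algebra element
  \<open>W = (A\<^sub>W, b\<^sub>W)\<close>. Since \<open>g\<close> is an isometry, the orbit metric at \<open>g\<close> is
  \<open>\<langle>X.p, Y.p\<rangle>\<close>, and as \<open>[X,Y].p = A\<^sub>X (Y.p) - A\<^sub>Y (X.p)\<close> the claim splits into two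
  facts. First, \<open>A\<^sub>X\<close> is skew for the form, because \<open>G\<close> consists of isometries. Second,
  \<open>\<langle>A\<^sub>Y x, Z.p\<rangle> + \<langle>Y.p, A\<^sub>Z x\<rangle> = 0\<close> for all \<open>x\<close>: an element \<open>h\<close> of the centralizer
  commutes with the infinitesimal action, \<open>W.(h.q) = A\<^sub>h (W.q)\<close>, and is an isometry, so
  \<open>q \<mapsto> \<langle>Y.q, Z.q\<rangle>\<close> is invariant under the centralizer, hence constant by transitivity;
  the displayed expression is the linear part of this quadratic function at \<open>p\<close>.
  Skewness and the commutation both come from differentiating, at the identity, a function
  that is constant on \<open>G\<close>.\<close>

lemma lie_alg_derivative_of_constant:
  fixes f :: "'n::finite aff \<Rightarrow> 'a::real_normed_vector"
  assumes X: "X \<in> lie_alg G" and f: "(f has_derivative f') (at aff_one)"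
    and const: "\<forall>g\<in>G. f g = k"
  shows "f' X = 0"
proof -
  obtain c where cG: "\<And>t. c t \<in> G" and c0: "c 0 = aff_one"
    and c: "(c has_derivative (\<lambda>t. t *\<^sub>R X)) (at 0)"
    using X unfolding lie_alg_def by blast
  have "((f \<circ> c) has_derivative (f' \<circ> (\<lambda>t. t *\<^sub>R X))) (at 0)"
    using diff_chain_at[OF c] f c0 by simp
  moreover have "((f \<circ> c) has_derivative (\<lambda>t. 0)) (at 0)"
    using const cG by (simp add: o_def)
  ultimately have "f' \<circ> (\<lambda>t. t *\<^sub>R X) = (\<lambda>t. 0)"
    by (rule has_derivative_unique)
  from fun_cong[OF this, of 1] show ?thesis
    by simp
qed

lemma bilinear_form: "bilinear (form S)"
  unfolding bilinear_def form_def
  by (auto intro!: linearI simp: inner_add_left inner_add_right matrix_vector_right_distrib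
      matrix_vector_mult_scaleR)

lemma form_isometry:
  assumes "transpose A ** S ** A = S"
  shows "form S (A *v u) (A *v v) = form S u v"
proof -
  have "form S (A *v u) (A *v v) = (u v* transpose A) \<bullet> (S *v (A *v v))"
    by (simp only: form_def vector_transpose_matrix)
  also have "\<dots> = u \<bullet> ((transpose A ** S ** A) *v v)"
    by (simp only: dot_lmul_matrix matrix_vector_mul_assoc matrix_mul_assoc)
  finally show ?thesis
    using assms by (simp add: form_def)
qed

lemma bounded_linear_orbit_map: "bounded_linear (orbit_map p)"
  unfolding linear_conv_bounded_linear[symmetric] orbit_map_def aff_apply_def
  by (rule linearI)
    (simp_all add: matrix_vector_mult_add_rdistrib scaleR_matrix_vector_assoc[symmetric]
      scaleR_right_distrib)

lemma orbit_map_translate: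
  "orbit_map (q + v) W = orbit_map q W + fst W *v v"
  "orbit_map (q - v) W = orbit_map q W - fst W *v v"
  by (simp_all add: orbit_map_def aff_apply_def matrix_vector_right_distrib
      matrix_vector_mult_diff_distrib algebra_simps)

lemma orbit_map_left_inv_field:
  "orbit_map p (left_inv_field g W) = fst g *v orbit_map p W"
  by (simp add: orbit_map_def aff_apply_def left_inv_field_def
      matrix_vector_right_distrib matrix_vector_mul_assoc)

lemma orbit_map_lie_bracket:
  "orbit_map p (lie_bracket X Y) = fst X *v orbit_map p Y - fst Y *v orbit_map p X"
  by (simp add: orbit_map_def aff_apply_def lie_bracket_def matrix_vector_mult_diff_rdistrib
      matrix_vector_right_distrib matrix_vector_mult_diff_distrib matrix_vector_mul_assoc algebra_simps)

lemma orbit_map_centralizer: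
  assumes X: "X \<in> lie_alg G" and h: "\<forall>g\<in>G. aff_mult h g = aff_mult g h"
  shows "orbit_map (aff_apply h q) X = fst h *v orbit_map q X"
proof -
  define L where "L W = orbit_map (aff_apply h q) W - fst h *v orbit_map q W" for W
  have "bounded_linear L"
    unfolding L_def
    by (intro bounded_linear_sub bounded_linear_orbit_map
        bounded_linear_compose[OF matrix_vector_mul_bounded_linear bounded_linear_orbit_map])
  then have "(L has_derivative L) (at aff_one)"
    by (rule bounded_linear_imp_has_derivative)
  moreover have "\<forall>g\<in>G. L g = snd h"
    \<comment> \<open>\<open>L g - b\<^sub>h = (gh).q - (hg).q\<close>\<close>
  proof
    fix g assume "g \<in> G"
    then have "aff_apply (aff_mult h g) q = aff_apply (aff_mult g h) q"
      using h by simp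
    then show "L g = snd h"
      by (simp add: L_def orbit_map_def aff_apply_def aff_mult_def matrix_vector_mul_assoc
          matrix_vector_right_distrib algebra_simps)
  qed
  ultimately have "L X = 0"
    using X by (intro lie_alg_derivative_of_constant)
  then show ?thesis
    by (simp add: L_def)
qed

lemma lie_alg_form_skew:
  assumes X: "X \<in> lie_alg G" and G: "G \<subseteq> Iso S"
  shows "form S (fst X *v u) v + form S u (fst X *v v) = 0"
proof -
  define f where "f g = (fst g *v u) \<bullet> (S *v (fst g *v v))" for g :: "'a aff"
  have lin_u: "bounded_linear (\<lambda>g::'a aff. fst g *v u)"
    and lin_v: "bounded_linear (\<lambda>g::'a aff. S *v (fst g *v v))"
    unfolding linear_conv_bounded_linear[symmetric]
    by (auto intro!: linearI simp: matrix_vector_mult_add_rdistrib matrix_vector_right_distrib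
        scaleR_matrix_vector_assoc[symmetric] matrix_vector_mult_scaleR)
  have "(f has_derivative (\<lambda>W. (fst aff_one *v u) \<bullet> (S *v (fst W *v v))
                                + (fst W *v u) \<bullet> (S *v (fst aff_one *v v)))) (at aff_one)"
    unfolding f_def
    by (intro has_derivative_inner bounded_linear_imp_has_derivative lin_u lin_v)
  then have "(f has_derivative (\<lambda>W. form S (fst W *v u) v + form S u (fst W *v v))) (at aff_one)"
    by (simp add: form_def aff_one_def add.commute)
  moreover have "\<forall>g\<in>G. f g = form S u v"
  proof
    fix g assume "g \<in> G"
    then have "transpose (fst g) ** S ** fst g = S"
      using G by (auto simp: Iso_def)
    then show "f g = form S u v"
      using form_isometry[of "fst g" S u v] by (simp add: f_def form_def)
  qed
  ultimately show ?thesis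
    using X by (intro lie_alg_derivative_of_constant)
qed

lemma form_orbit_map_base_point_independent:
  assumes G: "centralizer_transitive S G" and Y: "Y \<in> lie_alg G" and Z: "Z \<in> lie_alg G"
  shows "form S (orbit_map q Y) (orbit_map q Z) = form S (orbit_map p Y) (orbit_map p Z)"
proof -
  obtain h where "h \<in> Iso S" and h: "\<forall>g\<in>G. aff_mult h g = aff_mult g h"
    and q: "aff_apply h p = q"
    using G unfolding centralizer_transitive_def by blast
  then have h_iso: "transpose (fst h) ** S ** fst h = S"
    by (simp add: Iso_def)
  have "orbit_map q Y = fst h *v orbit_map p Y" and "orbit_map q Z = fst h *v orbit_map p Z"
    using orbit_map_centralizer[OF Y h, of p] orbit_map_centralizer[OF Z h, of p] q by simp_all
  then show ?thesis
    by (simp add: form_isometry[OF h_iso])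
qed

lemma bilinear_cross_terms_zero:
  fixes B :: "'a::real_vector \<Rightarrow> 'b::real_vector \<Rightarrow> real"
  assumes B: "bilinear B"
    and plus: "B (y + a) (z + b) = B y z" and minus: "B (y - a) (z - b) = B y z"
  shows "B a z + B y b = 0"
  using plus minus
  by (simp add: bilinear_ladd[OF B] bilinear_radd[OF B] bilinear_lsub[OF B] bilinear_rsub[OF B]
      algebra_simps)

lemma form_orbit_map_cross_terms_zero:
  assumes G: "centralizer_transitive S G" and Y: "Y \<in> lie_alg G" and Z: "Z \<in> lie_alg G"
  shows "form S (fst Y *v x) (orbit_map p Z) + form S (orbit_map p Y) (fst Z *v x) = 0"
  using form_orbit_map_base_point_independent[OF G Y Z, of "p + x" p]
    form_orbit_map_base_point_independent[OF G Y Z, of "p - x" p]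
  by (intro bilinear_cross_terms_zero[OF bilinear_form]) (simp_all add: orbit_map_translate)

theorem proposition4p5:
  fixes S :: "real^'n::finite^'n" and G :: "'n aff set" and p :: "real^'n"
  assumes "nondeg_symmetric S"
    and "is_subgroup G (Iso S)"
    and "zariski_closed_in_Iso S G"
    and "centralizer_transitive S G"
  shows "\<forall>g\<in>G. \<forall>X\<in>lie_alg G. \<forall>Y\<in>lie_alg G. \<forall>Z\<in>lie_alg G.
     orbit_metric S p (left_inv_field g (lie_bracket X Y)) (left_inv_field g Z)
       = - orbit_metric S p (left_inv_field g Y) (left_inv_field g (lie_bracket X Z))"
proof (intro ballI)
  fix g X Y Z
  assume g: "g \<in> G" and X: "X \<in> lie_alg G" and Y: "Y \<in> lie_alg G" and Z: "Z \<in> lie_alg G"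
  have G: "G \<subseteq> Iso S"
    using assms(2) by (simp add: is_subgroup_def)
  then have g_iso: "transpose (fst g) ** S ** fst g = S"
    using g by (auto simp: Iso_def)
  have "form S (fst X *v orbit_map p Y) (orbit_map p Z)
      + form S (orbit_map p Y) (fst X *v orbit_map p Z) = 0"
    using lie_alg_form_skew[OF X G] .
  moreover have "form S (fst Y *v orbit_map p X) (orbit_map p Z)
      + form S (orbit_map p Y) (fst Z *v orbit_map p X) = 0"
    using form_orbit_map_cross_terms_zero[OF assms(4) Y Z] .
  ultimately have "form S (orbit_map p (lie_bracket X Y)) (orbit_map p Z)
      = - form S (orbit_map p Y) (orbit_map p (lie_bracket X Z))"
    unfolding orbit_map_lie_bracket bilinear_lsub[OF bilinear_form] bilinear_rsub[OF bilinear_form]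
    by linarith
  then show "orbit_metric S p (left_inv_field g (lie_bracket X Y)) (left_inv_field g Z)
       = - orbit_metric S p (left_inv_field g Y) (left_inv_field g (lie_bracket X Z))"
    by (simp only: orbit_metric_def orbit_map_left_inv_field form_isometry[OF g_iso])
qed

end
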